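(* Let $k\in\{0,1,\dots,n\}$ and $Z=\{\bm z\in\{0,1\}^n:\ \|\bm z\|_1=k\}$, and let $\mathbf 1\in\mathbb R^n$ be the all-ones vector. Then $$P(\mathbf 1)=\{(\bm x,\bm z)\in\mathbb R^n\times[0,1]^n:\ \|\bm x\|_1\le\sqrt k,\ \|\bm z\|_1=k\}.$$
   Context: For $\bm\alpha\in\mathbb R^n$, $P_0(\bm\alpha)=\{(\bm x,\bm z)\in\mathbb R^n\times Z:\ \sum_{i=1}^n|\alpha_ix_i|\le\sqrt{\sum_{i=1}^n\alpha_i^2z_i}\}$ and $P(\bm\alpha)=\operatorname{conv}(P_0(\bm\alpha))$, the convex hull. *)

theory Defs
  imports "HOL-Analysis.Analysis"
begin

definition P0 :: "real^('n::finite) \<Rightarrow> (real^'n) set \<Rightarrow> ((real^'n) \<times> (real^'n)) set" where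
  "P0 \<alpha> Z = {(x, z). z \<in> Z \<and>
      (\<Sum>i\<in>UNIV. \<bar>\<alpha>$i * x$i\<bar>) \<le> sqrt (\<Sum>i\<in>UNIV. (\<alpha>$i)^2 * z$i)}"

definition P :: "real^('n::finite) \<Rightarrow> (real^'n) set \<Rightarrow> ((real^'n) \<times> (real^'n)) set" where
  "P \<alpha> Z = convex hull (P0 \<alpha> Z)"

definition Zk :: "nat \<Rightarrow> (real^('n::finite)) set" where
  "Zk k = {z. (\<forall>i. z$i \<in> {0,1}) \<and> (\<Sum>i\<in>UNIV. \<bar>z$i\<bar>) = real k}"

end

theory Submission
  imports Defs
begin

text \<open>
  The constraint of \<open>P\<^sub>0(\<one>)\<close> decouples: \<open>P\<^sub>0(\<one>) = B \<times> Z\<close> with \<open>B\<close> the \<open>\<ell>\<^sub>1\<close>-ball of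
  radius \<open>\<surd>k\<close>, because \<open>\<Sum>\<^sub>i z\<^sub>i = k\<close> on \<open>Z\<close>. Hence \<open>P(\<one>) = B \<times> conv Z\<close>, and \<open>conv Z\<close> is the
  hypersimplex \<open>[0,1]\<^sup>n \<inter> {\<Sum>\<^sub>i z\<^sub>i = k}\<close>: by Krein--Milman it is spanned by its extreme points,
  and a point with two fractional coordinates \<open>z\<^sub>i, z\<^sub>j\<close> is the midpoint of
  \<open>z \<plusminus> \<epsilon>(e\<^sub>i - e\<^sub>j)\<close>, while a single fractional coordinate is ruled out by the integral
  coordinate sum.
\<close>

definition hypersimplex :: "nat \<Rightarrow> (real^'n::finite) set" where
  "hypersimplex k = {z. (\<forall>i. 0 \<le> z$i \<and> z$i \<le> 1) \<and> (\<Sum>i\<in>UNIV. z$i) = real k}"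

lemma hypersimplex_eq_box_Int_hyperplane:
  "hypersimplex k = cbox 0 1 \<inter> {z. inner (1::real^'n::finite) z = real k}"
  unfolding hypersimplex_def by (auto simp: mem_box_cart inner_vec_def)

lemma compact_hypersimplex: "compact (hypersimplex k)"
  unfolding hypersimplex_eq_box_Int_hyperplane
  by (intro compact_Int_closed compact_cbox closed_hyperplane)

lemma convex_hypersimplex: "convex (hypersimplex k)"
  unfolding hypersimplex_eq_box_Int_hyperplane
  by (intro convex_Int convex_box convex_hyperplane)

lemma convex_l1_ball: "convex {x::real^'n::finite. (\<Sum>i\<in>UNIV. \<bar>x$i\<bar>) \<le> r}"
proof (rule convexI, clarsimp)
  fix x y :: "real^'n" and u v :: real
  assume x: "(\<Sum>i\<in>UNIV. \<bar>x$i\<bar>) \<le> r" and y: "(\<Sum>i\<in>UNIV. \<bar>y$i\<bar>) \<le> r"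
    and uv: "0 \<le> u" "0 \<le> v" "u + v = 1"
  then have "(\<Sum>i\<in>UNIV. \<bar>u * x$i + v * y$i\<bar>)
      \<le> u * (\<Sum>i\<in>UNIV. \<bar>x$i\<bar>) + v * (\<Sum>i\<in>UNIV. \<bar>y$i\<bar>)"
    by (auto simp: sum_distrib_left abs_mult simp flip: sum.distrib
        intro!: sum_mono abs_triangle_ineq[THEN order_trans])
  also have "\<dots> \<le> u * r + v * r"
    using x y uv by (intro add_mono mult_left_mono) auto
  finally show "(\<Sum>i\<in>UNIV. \<bar>u * x$i + v * y$i\<bar>) \<le> r"
    using uv by (simp flip: distrib_right)
qed

lemma Zk_eq: "Zk k = {z::real^'n::finite. (\<forall>i. z$i \<in> {0,1}) \<and> (\<Sum>i\<in>UNIV. z$i) = real k}"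
proof -
  have "\<bar>z$i\<bar> = z$i" if "\<forall>i. z$i \<in> {0,1}" for z :: "real^'n" and i
    using that[rule_format, of i] by auto
  then show ?thesis
    unfolding Zk_def by auto
qed

lemma Zk_subset_hypersimplex: "Zk k \<subseteq> hypersimplex k"
proof
  fix z :: "real^'n" assume "z \<in> Zk k"
  then have "z$i \<in> {0,1}" "(\<Sum>i\<in>UNIV. z$i) = real k" for i
    by (auto simp: Zk_eq)
  moreover have "0 \<le> z$i \<and> z$i \<le> 1" if "z$i \<in> {0,1}" for i
    using that by auto
  ultimately show "z \<in> hypersimplex k"
    unfolding hypersimplex_def by blast
qed

lemma Ints_unit_interval_iff:
  assumes "0 \<le> x" "x \<le> (1::real)"
  shows "x \<in> \<int> \<longleftrightarrow> x \<in> {0,1}"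
proof
  assume "x \<in> \<int>"
  then obtain m where "x = of_int m"
    by (auto elim: Ints_cases)
  with assms have "m = 0 \<or> m = 1"
    by auto
  with \<open>x = of_int m\<close> show "x \<in> {0,1}"
    by auto
qed auto

lemma coordinate_in_Ints_if_sum_in_Ints:
  fixes z :: "'a::finite \<Rightarrow> real"
  assumes "(\<Sum>j\<in>UNIV. z j) \<in> \<int>" and "\<And>j. j \<noteq> i \<Longrightarrow> z j \<in> \<int>"
  shows "z i \<in> \<int>"
proof -
  have "z i = (\<Sum>j\<in>UNIV. z j) - (\<Sum>j\<in>UNIV - {i}. z j)"
    by (simp add: sum.remove[of UNIV i])
  moreover have "(\<Sum>j\<in>UNIV - {i}. z j) \<in> \<int>"
    using assms(2) by (intro Ints_sum) blast
  ultimately show ?thesis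
    using assms(1) by simp
qed

lemma not_extreme_point_of_hypersimplex_two_fractional:
  fixes z :: "real^'n::finite"
  assumes z: "z \<in> hypersimplex k" and "i \<noteq> j"
    and i: "0 < z$i" "z$i < 1" and j: "0 < z$j" "z$j < 1"
  shows "\<not> z extreme_point_of hypersimplex k"
proof
  assume extreme: "z extreme_point_of hypersimplex k"
  define \<epsilon> where "\<epsilon> = min (min (z$i) (1 - z$i)) (min (z$j) (1 - z$j))"
  define d :: "real^'n" where "d = (\<chi> l. if l = i then 1 else if l = j then -1 else 0)"
  have "\<epsilon> > 0"
    using i j by (simp add: \<epsilon>_def)
  have d_sum: "(\<Sum>l\<in>UNIV. d$l) = 0"
    using \<open>i \<noteq> j\<close> by (simp add: d_def sum.If_cases Int_commute)
  have perturbed: "z + c *\<^sub>R d \<in> hypersimplex k" if "\<bar>c\<bar> \<le> \<epsilon>" for c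
  proof -
    have "0 \<le> (z + c *\<^sub>R d)$l \<and> (z + c *\<^sub>R d)$l \<le> 1" for l
      using that z i j by (auto simp: hypersimplex_def abs_le_iff d_def \<epsilon>_def)
    moreover have "(\<Sum>l\<in>UNIV. (z + c *\<^sub>R d)$l) = real k"
      using z d_sum by (simp add: hypersimplex_def sum.distrib flip: sum_distrib_left)
    ultimately show ?thesis
      by (simp add: hypersimplex_def)
  qed
  have "z + \<epsilon> *\<^sub>R d \<noteq> z + (-\<epsilon>) *\<^sub>R d"
    using \<open>\<epsilon> > 0\<close> by (auto simp: d_def vec_eq_iff)
  moreover have "midpoint (z + \<epsilon> *\<^sub>R d) (z + (-\<epsilon>) *\<^sub>R d) = z"
    by (simp add: midpoint_def vec_eq_iff algebra_simps)
  ultimately have "z \<in> open_segment (z + \<epsilon> *\<^sub>R d) (z + (-\<epsilon>) *\<^sub>R d)"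
    by (metis midpoint_in_open_segment)
  then show False
    using extreme perturbed[of \<epsilon>] perturbed[of "-\<epsilon>"] \<open>\<epsilon> > 0\<close>
    by (auto simp: extreme_point_of_def)
qed

lemma extreme_point_of_hypersimplex_in_Zk:
  fixes z :: "real^'n::finite"
  assumes extreme: "z extreme_point_of hypersimplex k"
  shows "z \<in> Zk k"
proof -
  have z: "z \<in> hypersimplex k"
    using extreme by (simp add: extreme_point_of_def)
  have binary_iff_integral: "z$i \<in> {0,1} \<longleftrightarrow> z$i \<in> \<int>" for i
    using z Ints_unit_interval_iff[of "z$i"] by (auto simp: hypersimplex_def)
  have fractional_unique: "i = j" if "z$i \<notin> \<int>" "z$j \<notin> \<int>" for i j
    using not_extreme_point_of_hypersimplex_two_fractional[OF z, of i j] extreme that z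
    by (auto simp: hypersimplex_def less_le binary_iff_integral[symmetric])
  have "z$i \<in> \<int>" for i
  proof (rule ccontr)
    assume "z$i \<notin> \<int>"
    then have "z$j \<in> \<int>" if "j \<noteq> i" for j
      using fractional_unique that by blast
    moreover have "(\<Sum>j\<in>UNIV. z$j) \<in> \<int>"
      using z by (simp add: hypersimplex_def)
    ultimately show False
      using coordinate_in_Ints_if_sum_in_Ints[of "\<lambda>j. z$j" i] \<open>z$i \<notin> \<int>\<close> by blast
  qed
  then have "z$i \<in> {0,1}" for i
    using binary_iff_integral by blast
  then show ?thesis
    using z by (simp add: Zk_eq hypersimplex_def)
qed

lemma convex_hull_Zk: "convex hull (Zk k :: (real^'n::finite) set) = hypersimplex k"
proof
  show "convex hull Zk k \<subseteq> hypersimplex k"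
    by (intro hull_minimal Zk_subset_hypersimplex convex_hypersimplex)
  have "hypersimplex k = convex hull {z. z extreme_point_of (hypersimplex k :: (real^'n) set)}"
    by (rule Krein_Milman_Minkowski[OF compact_hypersimplex convex_hypersimplex])
  also have "\<dots> \<subseteq> convex hull Zk k"
    by (intro hull_mono) (auto intro: extreme_point_of_hypersimplex_in_Zk)
  finally show "hypersimplex k \<subseteq> convex hull (Zk k :: (real^'n) set)" .
qed

lemma P0_one_Zk:
  "P0 (1 :: real^'n::finite) (Zk k) = {x. (\<Sum>i\<in>UNIV. \<bar>x$i\<bar>) \<le> sqrt (real k)} \<times> Zk k"
  unfolding P0_def by (auto simp: Zk_eq)

theorem mainTheorem7:
  fixes k :: nat
  assumes "k \<le> CARD('n)"
  shows "P (1 :: real^'n) (Zk k) =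
    {(x, z). (\<forall>i. 0 \<le> z$i \<and> z$i \<le> 1) \<and>
             (\<Sum>i\<in>UNIV. \<bar>x$i\<bar>) \<le> sqrt (real k) \<and>
             (\<Sum>i\<in>UNIV. \<bar>z$i\<bar>) = real k}"
proof -
  have "P (1 :: real^'n) (Zk k) = {x. (\<Sum>i\<in>UNIV. \<bar>x$i\<bar>) \<le> sqrt (real k)} \<times> hypersimplex k"
    unfolding P_def P0_one_Zk convex_hull_Times convex_hull_Zk
    by (simp add: convex_hull_eq[THEN iffD2, OF convex_l1_ball])
  then show ?thesis
    by (auto simp: hypersimplex_def)
qed

end
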